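(* Let $K, L$ be compact convex subsets of $\mathbb{R}^n$. Suppose that every triangle contained in $K$ can be translated inside $L$. If $W(K)=W(L)$, then $K$ and $L$ are translates of each other.
   Context: Here a triangle in $K$ means the convex hull of three points of $K$ (i.e. a polytope in $K$ with at most three vertices). For a compact convex set $K$ with support function $h_K(v)=\max_{x\in K} x\cdot v$, the mean width is $W(K) = \frac{2}{n \omega_n} \int_{S^{n-1}} h_K(u)\, du$, where $\omega_n$ is the volume of the Euclidean unit ball in $\mathbb{R}^n$ and $du$ is surface measure on the unit sphere $S^{n-1}$. *)

theory Defs
  imports "HOL-Analysis.Analysis"
begin

definition support_fun :: "'a::euclidean_space set \<Rightarrow> 'a \<Rightarrow> real" where
  "support_fun K v = (SUP x\<in>K. x \<bullet> v)"

text \<open>Surface (area) measure on the unit sphere, defined as the cone measure: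
  sigma(A) = n * lambda({t u. 0 < t < 1, u \<in> A}), i.e. n times the push-forward of
  Lebesgue measure on the punctured open unit ball under radial projection.\<close>
definition sphere_measure :: "'a::euclidean_space measure" where
  "sphere_measure = scale_measure (ennreal (real DIM('a)))
     (distr (restrict_space lborel (ball 0 1 - {0})) borel (\<lambda>x. x /\<^sub>R norm x))"

definition unit_ball_volume :: "'a::euclidean_space itself \<Rightarrow> real" where
  "unit_ball_volume _ = measure lborel (ball (0::'a) 1)"

definition mean_width :: "'a::euclidean_space set \<Rightarrow> real" where
  "mean_width K = 2 / (real DIM('a) * unit_ball_volume TYPE('a))
     * (\<integral>u. support_fun K u \<partial>sphere_measure)"

end

theory Submission
  imports Defs
begin

text \<open>
  Translating a segment [a, b] of K into L shows that the width h(u) + h(-u) of K is at most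
  that of L in every direction. Since the mean width is the spherical average of the width,
  equal mean widths force equal widths everywhere, by continuity. Then g = h_L - h_K is odd, and
  translating into L a triangle spanned by maximisers of u, w and -(u + w) in K shows that g is
  subadditive. An odd subadditive positively homogeneous function is linear, say g = \<langle>t, \<cdot>\<rangle>,
  so h_L = h_{t + K} and L = t + K.
\<close>

lemma support_fun_eqI:
  assumes "\<And>x. x \<in> K \<Longrightarrow> x \<bullet> v \<le> c" "p \<in> K" "p \<bullet> v = c"
  shows "support_fun K v = c"
  unfolding support_fun_def by (rule cSup_eq_maximum) (use assms in auto)

lemma support_fun_attained:
  fixes K :: "'a::euclidean_space set"
  assumes "compact K" "K \<noteq> {}"
  obtains x where "x \<in> K" "support_fun K v = x \<bullet> v" "\<And>y. y \<in> K \<Longrightarrow> y \<bullet> v \<le> x \<bullet> v"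
proof -
  have "continuous_on K (\<lambda>x. x \<bullet> v)" by (intro continuous_intros)
  then obtain x where "x \<in> K" "\<forall>y\<in>K. y \<bullet> v \<le> x \<bullet> v"
    using continuous_attains_sup[OF assms] by blast
  then show thesis by (intro that[of x]) (auto intro: support_fun_eqI)
qed

lemma inner_le_support_fun:
  fixes K :: "'a::euclidean_space set"
  assumes "compact K" "x \<in> K"
  shows "x \<bullet> v \<le> support_fun K v"
  using support_fun_attained[OF assms(1), of v] assms(2) by (metis empty_iff)

lemma support_fun_scaleR:
  fixes K :: "'a::euclidean_space set"
  assumes "compact K" "K \<noteq> {}" "c \<ge> 0"
  shows "support_fun K (c *\<^sub>R v) = c * support_fun K v"
proof -
  obtain x where "x \<in> K" "support_fun K v = x \<bullet> v" "\<And>y. y \<in> K \<Longrightarrow> y \<bullet> v \<le> x \<bullet> v"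
    using support_fun_attained[OF assms(1,2), where v = v] by metis
  then show ?thesis
    by (intro support_fun_eqI[where p = x]) (use assms(3) in \<open>auto intro: mult_left_mono\<close>)
qed

lemma support_fun_translation:
  fixes K :: "'a::euclidean_space set"
  assumes "compact K" "K \<noteq> {}"
  shows "support_fun ((\<lambda>x. t + x) ` K) v = t \<bullet> v + support_fun K v"
proof -
  obtain x where "x \<in> K" "support_fun K v = x \<bullet> v" "\<And>y. y \<in> K \<Longrightarrow> y \<bullet> v \<le> x \<bullet> v"
    using support_fun_attained[OF assms, where v = v] by metis
  then show ?thesis
    by (intro support_fun_eqI[where p = "t + x"]) (auto simp: inner_add_left)
qed

lemma lipschitz_on_support_fun:
  fixes K :: "'a::euclidean_space set"
  assumes "compact K" "K \<noteq> {}" "B > 0" "\<And>x. x \<in> K \<Longrightarrow> norm x \<le> B"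
  shows "B-lipschitz_on UNIV (support_fun K)"
proof -
  have le: "support_fun K u - support_fun K v \<le> B * dist u v" for u v
  proof -
    obtain x where x: "x \<in> K" "support_fun K u = x \<bullet> u"
      using support_fun_attained[OF assms(1,2)] by metis
    have "x \<bullet> u - x \<bullet> v \<le> norm x * norm (u - v)"
      using norm_cauchy_schwarz[of x "u - v"] by (simp add: inner_diff_right)
    also have "\<dots> \<le> B * norm (u - v)"
      using assms(4)[OF x(1)] by (intro mult_right_mono) auto
    finally show ?thesis
      using x inner_le_support_fun[OF assms(1) x(1), of v] by (simp add: dist_norm)
  qed
  show ?thesis
  proof (rule lipschitz_onI)
    show "dist (support_fun K u) (support_fun K v) \<le> B * dist u v" for u v
      using le[of u v] le[of v u] by (simp add: dist_real_def dist_commute abs_le_iff)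
  qed (use assms(3) in simp)
qed

lemma continuous_on_support_fun:
  fixes K :: "'a::euclidean_space set"
  assumes "compact K" "K \<noteq> {}"
  shows "continuous_on UNIV (support_fun K)"
proof -
  obtain B where "B > 0" "\<And>x. x \<in> K \<Longrightarrow> norm x \<le> B"
    using compact_imp_bounded[OF assms(1)] bounded_pos by metis
  then show ?thesis
    using lipschitz_on_support_fun[OF assms] lipschitz_on_continuous_on by blast
qed

lemma subset_if_support_fun_le:
  fixes A B :: "'a::euclidean_space set"
  assumes "compact A" "compact B" "convex B" "B \<noteq> {}"
    and "\<And>v. support_fun A v \<le> support_fun B v"
  shows "A \<subseteq> B"
proof
  fix z assume z: "z \<in> A"
  show "z \<in> B"
  proof (rule ccontr)
    assume "z \<notin> B"
    then obtain a b where ab: "a \<bullet> z < b" "\<forall>x\<in>B. b < a \<bullet> x"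
      using separating_hyperplane_closed_point[OF assms(3) compact_imp_closed[OF assms(2)]]
      by blast
    obtain x where "x \<in> B" "support_fun B (-a) = x \<bullet> (-a)"
      using support_fun_attained[OF assms(2,4)] by metis
    then show False
      using ab inner_le_support_fun[OF assms(1) z, of "-a"] assms(5)[of "-a"]
      by (auto simp: inner_commute)
  qed
qed

lemma eq_if_support_fun_eq:
  fixes K L :: "'a::euclidean_space set"
  assumes "compact K" "convex K" "K \<noteq> {}" "compact L" "convex L" "L \<noteq> {}"
    and "\<And>v. support_fun K v = support_fun L v"
  shows "K = L"
  using subset_if_support_fun_le[of K L] subset_if_support_fun_le[of L K] assms by auto

lemma linear_imp_inner_right:
  fixes g :: "'a::euclidean_space \<Rightarrow> real"
  assumes "linear g"
  obtains t where "\<And>v. g v = t \<bullet> v"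
proof
  fix v
  show "g v = (\<Sum>i\<in>Basis. g i *\<^sub>R i) \<bullet> v"
    using Linear_Algebra.linear_componentwise[OF assms, of v 1]
    by (simp add: inner_sum_left inner_commute[of v] mult.commute)
qed

lemma translate_if_linear_support_fun_diff:
  fixes K L :: "'a::euclidean_space set"
  assumes "compact K" "convex K" "K \<noteq> {}" "compact L" "convex L" "L \<noteq> {}"
    and "linear (\<lambda>v. support_fun L v - support_fun K v)"
  shows "\<exists>t. L = (\<lambda>x. t + x) ` K"
proof -
  obtain t where t: "\<And>v. support_fun L v - support_fun K v = t \<bullet> v"
    using linear_imp_inner_right[OF assms(7)] by blast
  have "L = (\<lambda>x. t + x) ` K"
  proof (rule eq_if_support_fun_eq)
    show "support_fun L v = support_fun ((\<lambda>x. t + x) ` K) v" for v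
      using t[of v] by (simp add: support_fun_translation[OF assms(1,3)])
  qed (use assms compact_translation convex_translation in auto)
  then show ?thesis ..
qed

lemma linear_if_odd_subadditive_nonneg_homogeneous:
  fixes g :: "'a::real_vector \<Rightarrow> real"
  assumes odd: "\<And>u. g (-u) = - g u"
    and subadd: "\<And>u w. g (u + w) \<le> g u + g w"
    and homog: "\<And>c u. c \<ge> 0 \<Longrightarrow> g (c *\<^sub>R u) = c * g u"
  shows "linear g"
proof (rule linearI)
  fix u w
  have "- g (u + w) \<le> - g u - g w"
    using subadd[of "-u" "-w"] odd[of u] odd[of w] odd[of "u + w"] by (simp add: add.commute)
  then show "g (u + w) = g u + g w" using subadd[of u w] by linarith
next
  fix c u
  show "g (c *\<^sub>R u) = c *\<^sub>R g u"
  proof (cases "c \<ge> 0")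
    case False
    then have "g (c *\<^sub>R u) = - g ((-c) *\<^sub>R u)" using odd[of "(-c) *\<^sub>R u"] by simp
    then show ?thesis using homog[of "-c" u] False by simp
  qed (simp add: homog)
qed

definition width :: "'a::euclidean_space set \<Rightarrow> 'a \<Rightarrow> real" where
  "width K u = support_fun K u + support_fun K (-u)"

lemma width_scaleR:
  fixes K :: "'a::euclidean_space set"
  assumes "compact K" "K \<noteq> {}" "c \<ge> 0"
  shows "width K (c *\<^sub>R u) = c * width K u"
  using support_fun_scaleR[OF assms, of u] support_fun_scaleR[OF assms, of "-u"]
  by (simp add: width_def distrib_left)

lemma continuous_on_width:
  fixes K :: "'a::euclidean_space set"
  assumes "compact K" "K \<noteq> {}"
  shows "continuous_on UNIV (width K)"
  unfolding width_def
  by (intro continuous_on_add continuous_on_compose2[OF continuous_on_support_fun[OF assms]]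
      continuous_on_support_fun[OF assms] continuous_intros) auto

lemma width_le_if_segments_translate:
  fixes K L :: "'a::euclidean_space set"
  assumes "compact K" "K \<noteq> {}" "compact L"
    and segments: "\<forall>a\<in>K. \<forall>b\<in>K. \<exists>t. (\<lambda>x. t + x) ` (convex hull {a, b}) \<subseteq> L"
  shows "width K u \<le> width L u"
proof -
  obtain a where a: "a \<in> K" "support_fun K u = a \<bullet> u"
    using support_fun_attained[OF assms(1,2)] by metis
  obtain b where b: "b \<in> K" "support_fun K (-u) = b \<bullet> (-u)"
    using support_fun_attained[OF assms(1,2)] by metis
  obtain t where "(\<lambda>x. t + x) ` (convex hull {a, b}) \<subseteq> L"
    using segments a(1) b(1) by blast
  then have "t + a \<in> L" "t + b \<in> L" by (auto intro: hull_inc)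
  then show ?thesis
    using inner_le_support_fun[OF assms(3) \<open>t + a \<in> L\<close>, of u]
      inner_le_support_fun[OF assms(3) \<open>t + b \<in> L\<close>, of "-u"] a b
    by (simp add: width_def inner_add_left)
qed

text \<open>
  The definition of the sphere measure pushes Lebesgue measure on the punctured unit ball
  forward radially, so integrals over the sphere become the following integrals over the ball.
\<close>

definition radial_integral :: "('a::euclidean_space \<Rightarrow> real) \<Rightarrow> real" where
  "radial_integral f = (\<integral>x. indicator (ball 0 1 - {0}) x * f (x /\<^sub>R norm x) \<partial>lborel)"

lemma integral_sphere_measure:
  fixes f :: "'a::euclidean_space \<Rightarrow> real"
  assumes "continuous_on UNIV f"
  shows "integral\<^sup>L sphere_measure f = real DIM('a) * radial_integral f"
proof -
  define D :: "'a set" where "D = ball 0 1 - {0}"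
  define N where "N = distr (restrict_space lborel D) borel (\<lambda>x::'a. x /\<^sub>R norm x)"
  have [measurable]: "f \<in> borel_measurable borel" "D \<in> sets borel"
    using assms by (auto intro: borel_measurable_continuous_onI simp: D_def)
  have sphere_density: "(sphere_measure :: 'a measure) = density N (\<lambda>_. ennreal (real DIM('a)))"
    unfolding sphere_measure_def N_def[symmetric]
    by (rule measure_eqI) (auto simp: N_def D_def emeasure_density nn_integral_cmult_indicator)
  have "integral\<^sup>L sphere_measure f = integral\<^sup>L N (\<lambda>x. real DIM('a) *\<^sub>R f x)"
    unfolding sphere_density by (rule integral_density) (auto simp: N_def)
  also have "\<dots> = real DIM('a) * integral\<^sup>L (restrict_space lborel D) (\<lambda>x. f (x /\<^sub>R norm x))"
    unfolding N_def by (subst integral_distr) (auto intro: measurable_restrict_space1)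
  also have "\<dots> = real DIM('a) * radial_integral f"
    by (subst integral_restrict_space) (auto simp: radial_integral_def D_def)
  finally show ?thesis .
qed

lemma radial_integrable:
  fixes f :: "'a::euclidean_space \<Rightarrow> real"
  assumes f: "continuous_on UNIV f"
  shows "integrable lborel (\<lambda>x. indicator (ball 0 1 - {0}) x * f (x /\<^sub>R norm x))"
proof -
  have [measurable]: "f \<in> borel_measurable borel" "ball (0::'a) 1 - {0} \<in> sets borel"
    using f by (auto intro: borel_measurable_continuous_onI)
  have "compact (f ` sphere (0::'a) 1)"
    by (rule compact_continuous_image) (auto intro: continuous_on_subset[OF f])
  then obtain B where B: "\<And>u. u \<in> sphere (0::'a) 1 \<Longrightarrow> \<bar>f u\<bar> \<le> B"
    using compact_imp_bounded bounded_iff by (metis image_eqI real_norm_def)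
  have "emeasure lborel (ball (0::'a) 1 - {0}) < \<infinity>"
    by (rule le_less_trans[OF emeasure_mono emeasure_lborel_ball_finite]) auto
  then have "integrable lborel (\<lambda>x. indicator (ball (0::'a) 1 - {0}) x * B)"
    by (intro integrable_mult_left integrable_real_indicator) auto
  then show ?thesis
  proof (rule Bochner_Integration.integrable_bound)
    show "AE x in lborel. norm (indicator (ball 0 1 - {0}) x * f (x /\<^sub>R norm x))
        \<le> norm (indicator (ball (0::'a) 1 - {0}) x * B)"
    proof (intro AE_I2)
      fix x :: 'a
      show "norm (indicator (ball 0 1 - {0}) x * f (x /\<^sub>R norm x))
        \<le> norm (indicator (ball (0::'a) 1 - {0}) x * B)"
        using B[of "x /\<^sub>R norm x"] by (cases "x = 0") (auto simp: indicator_def)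
    qed
  qed measurable
qed

lemma radial_integral_add:
  fixes f g :: "'a::euclidean_space \<Rightarrow> real"
  assumes "continuous_on UNIV f" "continuous_on UNIV g"
  shows "radial_integral (\<lambda>u. f u + g u) = radial_integral f + radial_integral g"
  using radial_integrable[OF assms(1)] radial_integrable[OF assms(2)]
  by (simp add: radial_integral_def distrib_left)

lemma radial_integral_reflect:
  fixes f :: "'a::euclidean_space \<Rightarrow> real"
  assumes "continuous_on UNIV f"
  shows "radial_integral (\<lambda>u. f (- u)) = radial_integral f"
proof -
  have [measurable]: "f \<in> borel_measurable borel" "ball (0::'a) 1 - {0} \<in> sets borel"
    using assms by (auto intro: borel_measurable_continuous_onI)
  have lborel_reflect: "distr lborel borel uminus = (lborel :: 'a measure)"
    using lborel_affine[of "-1" "0::'a"] by (simp add: density_1)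
  have "radial_integral f = (\<integral>x. indicator (ball 0 1 - {0}) x * f (x /\<^sub>R norm x)
      \<partial>distr lborel borel uminus)"
    unfolding radial_integral_def lborel_reflect ..
  also have "\<dots> = (\<integral>x. indicator (ball 0 1 - {0}) (-x) * f ((-x) /\<^sub>R norm (-x)) \<partial>lborel)"
    by (rule integral_distr) auto
  also have "\<dots> = radial_integral (\<lambda>u. f (- u))"
    unfolding radial_integral_def by (intro Bochner_Integration.integral_cong) (auto simp: indicator_def)
  finally show ?thesis ..
qed

lemma radial_integral_pos:
  fixes f :: "'a::euclidean_space \<Rightarrow> real"
  assumes f: "continuous_on UNIV f" and nonneg: "\<And>u. f u \<ge> 0"
    and u: "norm u = 1" "f u > 0"
  shows "radial_integral f > 0"
proof -
  define G where "G x = indicator (ball (0::'a) 1 - {0}) x * f (x /\<^sub>R norm x)" for x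
  have [measurable]: "f \<in> borel_measurable borel" "ball (0::'a) 1 - {0} \<in> sets borel"
    using f by (auto intro: borel_measurable_continuous_onI)
  define m where "m = (1/2) *\<^sub>R u"
  have "continuous (at m) (\<lambda>x. f (x /\<^sub>R norm x))"
    using u
    by (intro continuous_at_compose[where f = "\<lambda>x. x /\<^sub>R norm x" and g = f, unfolded o_def]
        continuous_intros continuous_on_interior[OF f]) (auto simp: m_def)
  moreover have "m /\<^sub>R norm m = u" using u by (auto simp: m_def)
  ultimately obtain d where d: "d > 0" "\<And>x. dist x m < d \<Longrightarrow> dist (f (x /\<^sub>R norm x)) (f u) < f u"
    using u(2) unfolding continuous_at_eps_delta by metis
  define r where "r = min d (1/2)"
  have G_pos: "G x > 0" if "x \<in> ball m r" for x
  proof -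
    have "norm (x - m) < 1/2" "norm (x - m) < d"
      using that by (auto simp: r_def dist_norm norm_minus_commute)
    moreover have "norm m = 1/2" using u by (simp add: m_def)
    ultimately have "x \<in> ball 0 1 - {0}" "f (x /\<^sub>R norm x) > 0"
      using norm_triangle_ineq2[of x m] norm_triangle_ineq3[of x m] d(2)[of x]
      by (auto simp: dist_norm abs_diff_less_iff)
    then show ?thesis by (simp add: G_def)
  qed
  have "\<not> (AE x in lborel. G x = 0)"
  proof
    assume "AE x in lborel. G x = 0"
    then have "AE x in lborel. x \<notin> ball m r" by eventually_elim (use G_pos in force)
    then have "emeasure lborel (ball m r) = 0"
      by (subst (asm) AE_iff_measurable[where N = "ball m r"]) auto
    moreover have "measure lborel (ball m r) > 0"
      using d(1) by (intro content_ball_pos) (simp add: r_def)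
    ultimately show False by (simp add: measure_def)
  qed
  moreover have "integrable lborel G" "AE x in lborel. G x \<ge> 0"
    using radial_integrable[OF f] nonneg by (auto simp: G_def[abs_def])
  ultimately have "integral\<^sup>L lborel G \<noteq> 0" "integral\<^sup>L lborel G \<ge> 0"
    using integral_nonneg_eq_0_iff_AE[of lborel G] by (auto intro: integral_nonneg_AE)
  then show ?thesis by (simp add: radial_integral_def G_def[abs_def])
qed

lemma mean_width_eq_radial_integral_width:
  fixes K :: "'a::euclidean_space set"
  assumes "compact K" "K \<noteq> {}"
  shows "mean_width K = radial_integral (width K) / unit_ball_volume TYPE('a)"
proof -
  have h: "continuous_on UNIV (support_fun K)"
    by (rule continuous_on_support_fun[OF assms])
  have "radial_integral (width K) = 2 * radial_integral (support_fun K)"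
    unfolding width_def
    by (simp add: radial_integral_add radial_integral_reflect h
        continuous_on_compose2[OF h continuous_on_minus[OF continuous_on_id]])
  then show ?thesis
    by (simp add: mean_width_def integral_sphere_measure[OF h])
qed

lemma width_eq_if_mean_width_eq:
  fixes K L :: "'a::euclidean_space set"
  assumes "compact K" "K \<noteq> {}" "compact L" "L \<noteq> {}"
    and le: "\<And>u. width K u \<le> width L u" and eq: "mean_width K = mean_width L"
  shows "width K u = width L u"
proof -
  define F where "F u = width L u - width K u" for u
  have F: "continuous_on UNIV F"
    unfolding F_def by (intro continuous_on_diff continuous_on_width assms(1-4))
  have "unit_ball_volume TYPE('a) > 0"
    unfolding unit_ball_volume_def by (rule content_ball_pos) simp
  then have "radial_integral (width K) = radial_integral (width L)"
    using eq by (simp add: mean_width_eq_radial_integral_width assms(1-4))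
  then have "radial_integral F = 0"
    using radial_integral_add[OF F continuous_on_width[OF assms(1,2)]]
    by (simp add: F_def)
  moreover have F_nonneg: "F v \<ge> 0" for v
    using le by (simp add: F_def)
  ultimately have F_sphere: "F v = 0" if "norm v = 1" for v
    using radial_integral_pos[OF F F_nonneg that] F_nonneg[of v] by (metis less_irrefl order_le_less)
  show ?thesis
  proof (cases "u = 0")
    case False
    have "F (norm u *\<^sub>R (u /\<^sub>R norm u)) = norm u * F (u /\<^sub>R norm u)"
      by (simp add: F_def width_scaleR assms(1-4) right_diff_distrib del: scaleR_scaleR)
    then show ?thesis using False F_sphere[of "u /\<^sub>R norm u"] by (simp add: F_def)
  qed (use width_scaleR[OF assms(1,2), of 0 0] width_scaleR[OF assms(3,4), of 0 0] in simp)
qed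

lemma linear_support_fun_diff_if_triangles_translate:
  fixes K L :: "'a::euclidean_space set"
  assumes K: "compact K" "K \<noteq> {}" and L: "compact L" "L \<noteq> {}"
    and triangles: "\<forall>a\<in>K. \<forall>b\<in>K. \<forall>c\<in>K. \<exists>t. (\<lambda>x. t + x) ` (convex hull {a, b, c}) \<subseteq> L"
    and widths: "\<And>u. width K u = width L u"
  shows "linear (\<lambda>v. support_fun L v - support_fun K v)" (is "linear ?g")
proof (rule linear_if_odd_subadditive_nonneg_homogeneous)
  show "?g (-u) = - ?g u" for u
    using widths[of u] by (simp add: width_def)
  show "?g (c *\<^sub>R u) = c * ?g u" if "c \<ge> 0" for c u
    using that by (simp add: support_fun_scaleR K L right_diff_distrib)
  show "?g (u + w) \<le> ?g u + ?g w" for u w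
  proof -
    obtain a where a: "a \<in> K" "support_fun K u = a \<bullet> u"
      using support_fun_attained[OF K] by metis
    obtain b where b: "b \<in> K" "support_fun K w = b \<bullet> w"
      using support_fun_attained[OF K] by metis
    obtain c where c: "c \<in> K" "support_fun K (-(u + w)) = c \<bullet> (-(u + w))"
      using support_fun_attained[OF K] by metis
    obtain t where "(\<lambda>x. t + x) ` (convex hull {a, b, c}) \<subseteq> L"
      using triangles a(1) b(1) c(1) by blast
    then have "t + a \<in> L" "t + b \<in> L" "t + c \<in> L" by (auto intro: hull_inc)
    then have "t \<bullet> u \<le> ?g u" "t \<bullet> w \<le> ?g w" "- (t \<bullet> (u + w)) \<le> ?g (-(u + w))"
      using inner_le_support_fun[OF L(1) \<open>t + a \<in> L\<close>, of u]
        inner_le_support_fun[OF L(1) \<open>t + b \<in> L\<close>, of w]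
        inner_le_support_fun[OF L(1) \<open>t + c \<in> L\<close>, of "-(u + w)"] a b c
      by (simp_all add: inner_add_left inner_add_right inner_diff_right)
    moreover have "?g (-(u + w)) = - ?g (u + w)"
      using widths[of "u + w"] by (simp add: width_def)
    ultimately show ?thesis by (simp add: inner_add_right)
  qed
qed

theorem corollary2p8:
  fixes K L :: "'a::euclidean_space set"
  assumes "compact K" "convex K" "K \<noteq> {}"
    and "compact L" "convex L" "L \<noteq> {}"
    and "\<forall>a\<in>K. \<forall>b\<in>K. \<forall>c\<in>K. \<exists>t. (\<lambda>x. t + x) ` (convex hull {a, b, c}) \<subseteq> L"
    and "mean_width K = mean_width L"
  shows "\<exists>t. L = (\<lambda>x. t + x) ` K"
proof -
  have "\<forall>a\<in>K. \<forall>b\<in>K. \<exists>t. (\<lambda>x. t + x) ` (convex hull {a, b}) \<subseteq> L"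
    using assms(7) by (metis insert_absorb2 insert_commute)
  then have "width K u \<le> width L u" for u
    using width_le_if_segments_translate assms(1,3,4) by blast
  then have "width K u = width L u" for u
    using width_eq_if_mean_width_eq assms(1,3,4,6,8) by blast
  then have "linear (\<lambda>v. support_fun L v - support_fun K v)"
    using linear_support_fun_diff_if_triangles_translate assms(1,3,4,6,7) by blast
  then show ?thesis
    using translate_if_linear_support_fun_diff assms(1-6) by blast
qed

end
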